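(* Let $N\ge2$, let $v_1,\dots,v_N$ be distinct reals with prior probabilities $p(v_n)>0$, $\sum_np(v_n)=1$, let $\lambda,\sigma_Z,T>0$ and $G$ the CDF of $N(0,\sigma_Z^2T)$. Fix $M\ge1$ and consider the problem $$\max_{p(\cdot|\cdot),q(\cdot)}\sum_{m=1}^M\mathbb E[\tilde v|s_m]I_mq(s_m)-\lambda\Big\{\sum_{m=1}^M\sum_{n=1}^N\log\big(p(v_n|s_m)\big)p(v_n|s_m)q(s_m)-\sum_{n=1}^N\log\big(p(v_n)\big)p(v_n)\Big\}$$ subject to $\sum_{n=1}^Np(v_n|s_m)=1$ for $1\le m\le M$ and $\sum_{m=1}^Mp(v_n|s_m)q(s_m)=p(v_n)$ for $1\le n\le N$. Then the optimal posteriors for signal states $s_m$ with $q(s_m)>0$ are $$p(v_n|s_m)=\frac{e^{(v_nI_m+\mu_n)/\lambda}}{\sum_{n'=1}^Ne^{(v_{n'}I_m+\mu_{n'})/\lambda}},\qquad1\le n\le N,$$ where, for given $q(s_1),\dots,q(s_M)$, a vector $(\mu_1,\dots,\mu_N)$ such that the Bayes plausibility constraint holds exists and is unique up to an additive constant. The optimal value is $$\max_{q(\cdot)}\Big\{\lambda\sum_{m=1}^M\log\Big(\sum_{n=1}^Ne^{(v_nI_m+\mu_n)/\lambda}\Big)q(s_m)+\lambda\sum_{n=1}^N\log\big(p(v_n)\big)p(v_n)-\sum_{n=1}^N\mu_np(v_n)\Big\},$$ and there exists an optimal $q$.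
   Context: The signal takes $M$ values $s_1,\dots,s_M$ with probabilities $q(s_m)\ge0$ summing to 1 (ranging over the simplex of $\mathbb R^M$); $Q_0=0$, $Q_m=\sum_{i=1}^mq(s_i)$, and $I_m=\frac1{q(s_m)}\int_{Q_{m-1}}^{Q_m}G^{-1}(u)\,du$ for $q(s_m)>0$. $\mathbb E[\tilde v|s_m]=\sum_nv_np(v_n|s_m)$. States with $q(s_m)=0$ do not contribute to the sums. The objective is the informed trader's expected Kyle–Back trading profit minus the mutual-information cost. *)

theory Defs
  imports "HOL-Probability.Probability"
begin

definition normal_cdf :: "real \<Rightarrow> real \<Rightarrow> real" where
  "normal_cdf s = cdf (density lborel (normal_density 0 s))"

text \<open>Inverse of a (strictly increasing) CDF, used on the open interval (0,1).\<close>
definition inv_cdf :: "(real \<Rightarrow> real) \<Rightarrow> real \<Rightarrow> real" where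
  "inv_cdf F u = (THE x. F x = u)"

definition signal_simplex :: "nat \<Rightarrow> (nat \<Rightarrow> real) set" where
  "signal_simplex M = {q. (\<forall>m\<in>{1..M}. q m \<ge> 0) \<and> (\<Sum>m=1..M. q m) = 1}"

definition cumq :: "(nat \<Rightarrow> real) \<Rightarrow> nat \<Rightarrow> real" where
  "cumq q m = (\<Sum>i=1..m. q i)"

definition Imean :: "(real \<Rightarrow> real) \<Rightarrow> (nat \<Rightarrow> real) \<Rightarrow> nat \<Rightarrow> real" where
  "Imean G q m = (1 / q m) *
     interval_lebesgue_integral lborel (ereal (cumq q (m - 1))) (ereal (cumq q m)) (inv_cdf G)"

text \<open>E[v | s_m] for posteriors P m n = p(v_n | s_m).\<close>
definition cond_mean :: "nat \<Rightarrow> (nat \<Rightarrow> real) \<Rightarrow> (nat \<Rightarrow> nat \<Rightarrow> real) \<Rightarrow> nat \<Rightarrow> real" where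
  "cond_mean N v P m = (\<Sum>n=1..N. v n * P m n)"

definition bayes_plausible ::
  "nat \<Rightarrow> nat \<Rightarrow> (nat \<Rightarrow> real) \<Rightarrow> (nat \<Rightarrow> nat \<Rightarrow> real) \<Rightarrow> (nat \<Rightarrow> real) \<Rightarrow> bool" where
  "bayes_plausible N M p P q \<longleftrightarrow> (\<forall>n\<in>{1..N}. (\<Sum>m=1..M. P m n * q m) = p n)"

definition feasible ::
  "nat \<Rightarrow> nat \<Rightarrow> (nat \<Rightarrow> real) \<Rightarrow> (nat \<Rightarrow> nat \<Rightarrow> real) \<Rightarrow> (nat \<Rightarrow> real) \<Rightarrow> bool" where
  "feasible N M p P q \<longleftrightarrow>
     q \<in> signal_simplex M \<and>
     (\<forall>m\<in>{1..M}. \<forall>n\<in>{1..N}. P m n \<ge> 0) \<and>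
     (\<forall>m\<in>{1..M}. (\<Sum>n=1..N. P m n) = 1) \<and>
     bayes_plausible N M p P q"

text \<open>Objective: expected trading profit minus lambda times mutual information.
  States with q(s_m) = 0 do not contribute.\<close>
definition objective ::
  "nat \<Rightarrow> nat \<Rightarrow> (nat \<Rightarrow> real) \<Rightarrow> (nat \<Rightarrow> real) \<Rightarrow> real \<Rightarrow> (real \<Rightarrow> real)
   \<Rightarrow> (nat \<Rightarrow> nat \<Rightarrow> real) \<Rightarrow> (nat \<Rightarrow> real) \<Rightarrow> real" where
  "objective N M v p lam G P q =
     (\<Sum>m\<in>{m\<in>{1..M}. q m > 0}. cond_mean N v P m * Imean G q m * q m)
     - lam * ((\<Sum>m\<in>{m\<in>{1..M}. q m > 0}. \<Sum>n=1..N. ln (P m n) * P m n * q m)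
              - (\<Sum>n=1..N. ln (p n) * p n))"

definition partition_fn ::
  "nat \<Rightarrow> (nat \<Rightarrow> real) \<Rightarrow> real \<Rightarrow> (real \<Rightarrow> real) \<Rightarrow> (nat \<Rightarrow> real) \<Rightarrow> (nat \<Rightarrow> real) \<Rightarrow> nat \<Rightarrow> real" where
  "partition_fn N v lam G q \<mu> m = (\<Sum>n'=1..N. exp ((v n' * Imean G q m + \<mu> n') / lam))"

definition gibbs_post ::
  "nat \<Rightarrow> (nat \<Rightarrow> real) \<Rightarrow> real \<Rightarrow> (real \<Rightarrow> real) \<Rightarrow> (nat \<Rightarrow> real) \<Rightarrow> (nat \<Rightarrow> real)
   \<Rightarrow> nat \<Rightarrow> nat \<Rightarrow> real" where
  "gibbs_post N v lam G q \<mu> m n =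
     exp ((v n * Imean G q m + \<mu> n) / lam) / partition_fn N v lam G q \<mu> m"

definition value_q ::
  "nat \<Rightarrow> nat \<Rightarrow> (nat \<Rightarrow> real) \<Rightarrow> (nat \<Rightarrow> real) \<Rightarrow> real \<Rightarrow> (real \<Rightarrow> real)
   \<Rightarrow> (nat \<Rightarrow> real) \<Rightarrow> (nat \<Rightarrow> real) \<Rightarrow> real" where
  "value_q N M v p lam G q \<mu> =
     lam * (\<Sum>m\<in>{m\<in>{1..M}. q m > 0}. ln (partition_fn N v lam G q \<mu> m) * q m)
     + lam * (\<Sum>n=1..N. ln (p n) * p n)
     - (\<Sum>n=1..N. \<mu> n * p n)"

end

theory Submission
  imports Defs "HOL-Real_Asymp.Real_Asymp"
begin

(* For a fixed signal distribution q the problem decouples over the signal states once the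
   Bayes-plausibility constraints are priced by multipliers mu: for feasible posteriors,
   value_q minus the objective is the sum over the states with q(s_m) > 0 of q(s_m) times the
   gap in the Gibbs variational principle
     sum_n P_n a_n - lam sum_n P_n ln P_n <= lam ln sum_n exp(a_n / lam),
   whose equality case is the Gibbs distribution.  Suitable multipliers exist because the dual
   function  mu |-> sum_m q(s_m) lam ln Z_m(mu) - sum_n mu_n p(v_n)  is invariant under adding
   constants to mu and grows linearly with the spread max mu - min mu, so it attains its
   minimum, and its stationarity condition is Bayes plausibility.  They are unique up to a
   constant because the optimal posteriors are.  Finally I_m q(s_m) = Phi(Q_m) - Phi(Q_(m-1))
   with Phi the indefinite integral of the normal quantile function, which is integrable since
   the normal law has a mean; so the objective is continuous on the compact feasible set and an
   optimal q exists. *)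

section \<open>The normal quantile function\<close>

lemma real_distribution_normal_density:
  fixes s :: real
  assumes "s > 0"
  shows "real_distribution (density lborel (normal_density 0 s))"
  using prob_space_normal_density[OF assms]
  by (auto simp: real_distribution_def real_distribution_axioms_def)

lemma measure_density_lborel_singleton:
  fixes f :: "real \<Rightarrow> real" and x :: real
  assumes "f \<in> borel_measurable borel"
  shows "measure (density lborel f) {x} = 0"
proof -
  have "AE t in lborel. t \<in> {x} \<longrightarrow> ennreal (f t) = 0"
    using AE_lborel_singleton[of x] by eventually_elim auto
  then have "{x} \<in> null_sets (density lborel f)"
    using assms by (subst null_sets_density_iff) auto
  then show ?thesis by (simp add: measure_def null_setsD1)
qed

lemma emeasure_density_lborel_Ioc_pos:
  fixes f :: "real \<Rightarrow> real"
  assumes f: "f \<in> borel_measurable borel" "\<And>t. f t > 0" and "x < y"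
  shows "emeasure (density lborel f) {x<..y} > 0"
proof (rule ccontr)
  assume "\<not> emeasure (density lborel f) {x<..y} > 0"
  then have "{x<..y} \<in> null_sets (density lborel f)"
    by (auto simp: null_sets_def)
  then have "AE t in lborel. t \<in> {x<..y} \<longrightarrow> ennreal (f t) = 0"
    using f by (subst (asm) null_sets_density_iff) auto
  then have "AE t in lborel. t \<notin> {x<..y}"
  proof eventually_elim
    case (elim t)
    then show ?case using f(2)[of t] by auto
  qed
  then have "{x<..y} \<in> null_sets lborel"
    by (subst AE_iff_null_sets) auto
  then show False using \<open>x < y\<close> null_setsD1[of "{x<..y}" lborel] by simp
qed

lemma isCont_normal_cdf:
  fixes s x :: real
  assumes "s > 0"
  shows "isCont (normal_cdf s) x"
proof -
  interpret real_distribution "density lborel (normal_density 0 s)"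
    by (rule real_distribution_normal_density[OF assms])
  have "measure (density lborel (normal_density 0 s)) {x} = 0"
    by (rule measure_density_lborel_singleton) simp
  then show ?thesis
    unfolding normal_cdf_def by (rule isCont_cdf[THEN iffD2])
qed

lemma strict_mono_normal_cdf:
  fixes s :: real
  assumes "s > 0"
  shows "strict_mono (normal_cdf s)"
proof (rule strict_monoI)
  fix x y :: real
  assume "x < y"
  interpret real_distribution "density lborel (normal_density 0 s)"
    by (rule real_distribution_normal_density[OF assms])
  have "emeasure (density lborel (normal_density 0 s)) {x<..y} > 0"
    using normal_density_pos[OF assms] \<open>x < y\<close> by (intro emeasure_density_lborel_Ioc_pos) auto
  then have "measure (density lborel (normal_density 0 s)) {x<..y} > 0"
    by (simp add: emeasure_eq_measure)
  then show "normal_cdf s x < normal_cdf s y"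
    using cdf_diff_eq[OF \<open>x < y\<close>] unfolding normal_cdf_def by linarith
qed

lemma (in cdf_distribution) inv_cdf_eq_quantile:
  assumes cont: "\<And>x. isCont C x" and mono: "strict_mono C" and w: "0 < w" "w < 1"
  shows "inv_cdf C w = I w"
proof -
  have "C (I w) \<le> w"
  proof (rule tendsto_upperbound)
    show "(C \<longlongrightarrow> C (I w)) (at_left (I w))"
      using cont[of "I w"] by (simp add: isCont_def filterlim_at_split)
    have "C x \<le> w" if "x < I w" for x
      using pseudoinverse[OF w, of x] that by (metis not_le less_imp_le)
    then show "\<forall>\<^sub>F x in at_left (I w). C x \<le> w"
      by (intro eventually_at_leftI[of "I w - 1"]) auto
  qed simp
  moreover have "w \<le> C (I w)"
    using pseudoinverse[OF w, of "I w"] by simp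
  ultimately have eq: "C (I w) = w"
    by simp
  show ?thesis
    unfolding inv_cdf_def
  proof (rule the_equality)
    fix x
    assume "C x = w"
    then show "x = I w"
      using strict_mono_eq[OF mono, of x "I w"] eq by simp
  qed (rule eq)
qed

lemma (in cdf_distribution) set_integrable_quantile:
  assumes "integrable M (\<lambda>x. x)"
  shows "set_integrable lborel {0<..<1} I"
proof -
  have "integrable (distr (restrict_space lborel {0<..<1::real}) borel I) (\<lambda>x. x)"
    using assms distr_I_eq_M by simp
  then have "integrable (restrict_space lborel {0<..<1::real}) I"
    by (subst (asm) integrable_distr_eq) auto
  then show ?thesis
    by (simp add: set_integrable_def integrable_restrict_space)
qed

lemma set_integrable_inv_normal_cdf:
  fixes s :: real
  assumes s: "s > 0"
  shows "set_integrable lborel {0<..<1} (inv_cdf (normal_cdf s))"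
proof -
  interpret cdf_distribution "density lborel (normal_density 0 s)"
    using real_distribution_normal_density[OF s] by (simp add: cdf_distribution_def)
  have C: "C = normal_cdf s"
    by (simp add: normal_cdf_def)
  have inv: "inv_cdf (normal_cdf s) w = I w" if "0 < w" "w < 1" for w
    using inv_cdf_eq_quantile[OF _ _ that] isCont_normal_cdf[OF s] strict_mono_normal_cdf[OF s]
    unfolding C by blast
  have "integrable (density lborel (normal_density 0 s)) (\<lambda>x. x)"
    using integrable_normal_moment_nz_1[OF s, of 0]
    by (subst integrable_density) (auto simp: mult.commute)
  from set_integrable_quantile[OF this] show ?thesis
    by (rule set_integrable_cong[THEN iffD1, rotated -1]) (auto simp: inv)
qed

lemma set_integrable_Ioo_imp_integrable_on_Icc:
  fixes f :: "real \<Rightarrow> real"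
  assumes "set_integrable lborel {a<..<b} f"
  shows "f integrable_on {a..b}"
  using set_borel_integral_eq_integral(1)[OF assms] integrable_on_Icc_iff_Ioo by blast

lemma interval_lebesgue_integral_eq_integral_diff:
  fixes f :: "real \<Rightarrow> real"
  assumes f: "set_integrable lborel {0<..<1} f" and ab: "0 \<le> a" "a \<le> b" "b \<le> 1"
  shows "interval_lebesgue_integral lborel (ereal a) (ereal b) f = integral {0..b} f - integral {0..a} f"
proof -
  have f0b: "f integrable_on {0..b}"
    using set_integrable_Ioo_imp_integrable_on_Icc[OF f]
    by (rule integrable_on_subinterval) (use ab in auto)
  have "set_integrable lborel (einterval a b) f"
    by (rule set_integrable_subset[OF f]) (use ab in \<open>auto simp: einterval_def\<close>)
  then have "interval_lebesgue_integral lborel (ereal a) (ereal b) f = integral (einterval a b) f"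
    using ab by (intro interval_integral_eq_integral') auto
  also have "einterval a b = {a<..<b}"
    by (auto simp: einterval_def)
  also have "integral {a<..<b} f = integral {a..b} f"
    by (simp add: integral_open_interval_real)
  also have "integral {a..b} f = integral {0..b} f - integral {0..a} f"
    using Henstock_Kurzweil_Integration.integral_combine[OF _ _ f0b, of a] ab by simp
  finally show ?thesis .
qed

section \<open>The Gibbs variational principle\<close>

lemma relative_entropy_term_nonneg:
  fixes x y :: real
  assumes "x \<ge> 0" "y > 0"
  shows "x * (ln x - ln y) - (x - y) \<ge> 0"
    and "x * (ln x - ln y) - (x - y) = 0 \<longleftrightarrow> x = y"
proof -
  have "x * (ln x - ln y) - (x - y) \<ge> 0 \<and> (x * (ln x - ln y) - (x - y) = 0 \<longleftrightarrow> x = y)"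
  proof (cases "x = 0")
    case False
    then have x: "x > 0" using assms by simp
    have "ln (y / x) \<le> y / x - 1"
      using x assms by (intro ln_le_minus_one) auto
    moreover have "ln (y / x) = y / x - 1 \<longleftrightarrow> y / x = 1"
      using x assms ln_eq_minus_one[of "y / x"] by auto
    moreover have "x * (ln x - ln y) - (x - y) = x * (y / x - 1 - ln (y / x))"
      using x assms by (simp add: ln_div algebra_simps)
    ultimately show ?thesis
      using x by (auto simp: mult_nonneg_nonneg)
  qed (use assms in auto)
  then show "x * (ln x - ln y) - (x - y) \<ge> 0" and "x * (ln x - ln y) - (x - y) = 0 \<longleftrightarrow> x = y"
    by auto
qed

lemma gibbs_variational_principle:
  fixes P a :: "nat \<Rightarrow> real" and S :: "nat set" and lam :: real
  assumes S: "finite S" "S \<noteq> {}" and lam: "lam > 0"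
    and P0: "\<forall>n\<in>S. P n \<ge> 0" and P1: "(\<Sum>n\<in>S. P n) = 1"
  defines "Z \<equiv> (\<Sum>n\<in>S. exp (a n / lam))"
  shows "(\<Sum>n\<in>S. P n * a n) - lam * (\<Sum>n\<in>S. ln (P n) * P n) \<le> lam * ln Z"
    and "(\<Sum>n\<in>S. P n * a n) - lam * (\<Sum>n\<in>S. ln (P n) * P n) = lam * ln Z
          \<longleftrightarrow> (\<forall>n\<in>S. P n = exp (a n / lam) / Z)"
proof -
  define \<pi> where "\<pi> n = exp (a n / lam) / Z" for n
  define h where "h n = P n * (ln (P n) - ln (\<pi> n)) - (P n - \<pi> n)" for n
  have Z: "Z > 0"
    unfolding Z_def using S by (intro sum_pos) auto
  then have \<pi>: "\<pi> n > 0" for n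
    by (simp add: \<pi>_def)
  have "(\<Sum>n\<in>S. h n) = (\<Sum>n\<in>S. P n * ln (P n)) - (\<Sum>n\<in>S. P n * a n) / lam
      + (\<Sum>n\<in>S. P n) * ln Z - (\<Sum>n\<in>S. P n) + (\<Sum>n\<in>S. \<pi> n)"
    using Z by (simp add: h_def \<pi>_def ln_div algebra_simps sum.distrib sum_subtractf
        sum_distrib_left sum_distrib_right sum_divide_distrib)
  also have "(\<Sum>n\<in>S. \<pi> n) = 1"
    using Z by (simp add: \<pi>_def Z_def sum_divide_distrib[symmetric])
  finally have gap: "lam * ln Z - ((\<Sum>n\<in>S. P n * a n) - lam * (\<Sum>n\<in>S. ln (P n) * P n))
      = lam * (\<Sum>n\<in>S. h n)"
    using P1 lam by (simp add: field_simps mult.commute)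
  have h: "h n \<ge> 0" "h n = 0 \<longleftrightarrow> P n = \<pi> n" if "n \<in> S" for n
    using relative_entropy_term_nonneg[of "P n" "\<pi> n"] P0 \<pi> that by (auto simp: h_def)
  then have "(\<Sum>n\<in>S. h n) \<ge> 0"
    by (intro sum_nonneg) auto
  then show "(\<Sum>n\<in>S. P n * a n) - lam * (\<Sum>n\<in>S. ln (P n) * P n) \<le> lam * ln Z"
    using gap lam by (smt (verit) mult_nonneg_nonneg)
  have "(\<Sum>n\<in>S. P n * a n) - lam * (\<Sum>n\<in>S. ln (P n) * P n) = lam * ln Z \<longleftrightarrow> (\<Sum>n\<in>S. h n) = 0"
    using gap lam by auto
  also have "\<dots> \<longleftrightarrow> (\<forall>n\<in>S. P n = \<pi> n)"
    using S h by (simp add: sum_nonneg_eq_0_iff)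
  finally show "(\<Sum>n\<in>S. P n * a n) - lam * (\<Sum>n\<in>S. ln (P n) * P n) = lam * ln Z
      \<longleftrightarrow> (\<forall>n\<in>S. P n = exp (a n / lam) / Z)"
    by (simp add: \<pi>_def)
qed

section \<open>Existence of the multipliers\<close>

definition lagrange_dual ::
  "nat \<Rightarrow> nat \<Rightarrow> (nat \<Rightarrow> nat \<Rightarrow> real) \<Rightarrow> real \<Rightarrow> (nat \<Rightarrow> real) \<Rightarrow> (nat \<Rightarrow> real)
   \<Rightarrow> (nat \<Rightarrow> real) \<Rightarrow> real" where
  "lagrange_dual N M a lam q p \<mu> =
     (\<Sum>m=1..M. q m * (lam * ln (\<Sum>n=1..N. exp ((a m n + \<mu> n) / lam)))) - (\<Sum>n=1..N. \<mu> n * p n)"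

lemma lagrange_dual_shift:
  assumes N: "N \<ge> 1" and lam: "lam > 0"
    and q1: "(\<Sum>m=1..M. q m) = 1" and p1: "(\<Sum>n=1..N. p n) = 1"
  shows "lagrange_dual N M a lam q p (\<lambda>n. \<mu> n + c) = lagrange_dual N M a lam q p \<mu>"
proof -
  have "lam * ln (\<Sum>n=1..N. exp ((a m n + (\<mu> n + c)) / lam))
      = c + lam * ln (\<Sum>n=1..N. exp ((a m n + \<mu> n) / lam))" for m
  proof -
    have "(\<Sum>n=1..N. exp ((a m n + (\<mu> n + c)) / lam))
        = exp (c / lam) * (\<Sum>n=1..N. exp ((a m n + \<mu> n) / lam))"
      by (simp add: sum_distrib_left add_divide_distrib exp_add[symmetric] algebra_simps)
    moreover have "(\<Sum>n=1..N. exp ((a m n + \<mu> n) / lam)) > 0"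
      using N by (intro sum_pos) auto
    ultimately show ?thesis
      using lam by (simp add: ln_mult distrib_left)
  qed
  then show ?thesis
    using q1 p1 by (simp add: lagrange_dual_def algebra_simps sum.distrib
        sum_distrib_left[symmetric] sum_distrib_right[symmetric])
qed

lemma lagrange_dual_ge_spread:
  assumes N: "N \<ge> 1" and lam: "lam > 0"
    and q0: "\<forall>m\<in>{1..M}. q m \<ge> 0" and q1: "(\<Sum>m=1..M. q m) = 1"
    and p1: "(\<Sum>n=1..N. p n) = 1" and pm: "0 \<le> pm" "\<forall>n\<in>{1..N}. pm \<le> p n"
    and A: "\<forall>m\<in>{1..M}. \<forall>n\<in>{1..N}. \<bar>a m n\<bar> \<le> A"
  shows "lagrange_dual N M a lam q p \<mu> \<ge> pm * (Max (\<mu> ` {1..N}) - Min (\<mu> ` {1..N})) - A"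
proof -
  let ?mx = "Max (\<mu> ` {1..N})" and ?mn = "Min (\<mu> ` {1..N})"
  have "?mx \<in> \<mu> ` {1..N}" "?mn \<in> \<mu> ` {1..N}"
    using N by (intro Max_in Min_in; auto)+
  then obtain k j where k: "k \<in> {1..N}" "\<mu> k = ?mx" and j: "j \<in> {1..N}" "\<mu> j = ?mn"
    by (metis imageE)
  have "lam * ln (\<Sum>n=1..N. exp ((a m n + \<mu> n) / lam)) \<ge> ?mx - A" if m: "m \<in> {1..M}" for m
  proof -
    have "exp ((a m k + \<mu> k) / lam) \<le> (\<Sum>n=1..N. exp ((a m n + \<mu> n) / lam))"
      using k by (intro member_le_sum) auto
    then have "(a m k + \<mu> k) / lam \<le> ln (\<Sum>n=1..N. exp ((a m n + \<mu> n) / lam))"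
      using N by (subst ln_ge_iff) (auto intro: sum_pos)
    then have "a m k + \<mu> k \<le> lam * ln (\<Sum>n=1..N. exp ((a m n + \<mu> n) / lam))"
      using lam by (simp add: field_simps)
    then show ?thesis
      using A m k by force
  qed
  then have "(\<Sum>m=1..M. q m * (?mx - A))
      \<le> (\<Sum>m=1..M. q m * (lam * ln (\<Sum>n=1..N. exp ((a m n + \<mu> n) / lam))))"
    using q0 by (intro sum_mono mult_left_mono) auto
  moreover have "(\<Sum>m=1..M. q m * (?mx - A)) = ?mx - A"
    using q1 by (simp add: sum_distrib_right[symmetric])
  moreover have "(?mx - ?mn) * pm \<le> (?mx - \<mu> j) * p j"
    using j pm Max_ge[of "\<mu> ` {1..N}" "\<mu> j"] by (intro mult_mono) auto
  moreover have "(?mx - \<mu> j) * p j \<le> (\<Sum>n=1..N. (?mx - \<mu> n) * p n)"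
    using j pm by (intro member_le_sum[where f="\<lambda>n. (?mx - \<mu> n) * p n"] mult_nonneg_nonneg)
      (auto intro: order_trans)
  moreover have "(\<Sum>n=1..N. (?mx - \<mu> n) * p n) = ?mx - (\<Sum>n=1..N. \<mu> n * p n)"
    using p1 by (simp add: left_diff_distrib sum_subtractf sum_distrib_left[symmetric])
  ultimately show ?thesis
    by (simp add: lagrange_dual_def algebra_simps)
qed

lemma lagrange_dual_zero_le:
  assumes N: "N \<ge> 1" and lam: "lam > 0"
    and q0: "\<forall>m\<in>{1..M}. q m \<ge> 0" and q1: "(\<Sum>m=1..M. q m) = 1"
    and A: "\<forall>m\<in>{1..M}. \<forall>n\<in>{1..N}. \<bar>a m n\<bar> \<le> A"
  shows "lagrange_dual N M a lam q p (\<lambda>_. 0) \<le> lam * ln (real N) + A"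
proof -
  have "lam * ln (\<Sum>n=1..N. exp (a m n / lam)) \<le> lam * ln (real N) + A" if m: "m \<in> {1..M}" for m
  proof -
    have "a m n \<le> A" if "n \<in> {1..N}" for n
      using A m that by fastforce
    then have "(\<Sum>n=1..N. exp (a m n / lam)) \<le> (\<Sum>n=1..N. exp (A / lam))"
      using lam by (intro sum_mono) (auto intro!: divide_right_mono)
    then have "ln (\<Sum>n=1..N. exp (a m n / lam)) \<le> ln (real N * exp (A / lam))"
      using N by (subst ln_le_cancel_iff) (auto intro: sum_pos)
    also have "\<dots> = ln (real N) + A / lam"
      using N by (simp add: ln_mult)
    finally show ?thesis
      using lam by (simp add: field_simps)
  qed
  then have "(\<Sum>m=1..M. q m * (lam * ln (\<Sum>n=1..N. exp (a m n / lam))))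
      \<le> (\<Sum>m=1..M. q m * (lam * ln (real N) + A))"
    using q0 by (intro sum_mono mult_left_mono) auto
  also have "\<dots> = lam * ln (real N) + A"
    using q1 by (simp add: sum_distrib_right[symmetric])
  finally show ?thesis
    by (simp add: lagrange_dual_def)
qed

lemma compact_PiE_UNIV:
  fixes B :: "'i \<Rightarrow> 'a::topological_space set"
  assumes "\<And>i. compact (B i)"
  shows "compact (PiE UNIV B)"
proof -
  have "compactin (product_topology (\<lambda>i. euclidean) UNIV) (PiE UNIV B)"
    using assms by (subst compactin_PiE) auto
  then show ?thesis
    by (simp add: euclidean_product_topology)
qed

text \<open>Outside the box every multiplier vector is worse than 0, by the linear growth in the
  spread; shifting by the minimum moves every other vector into the box.\<close>
lemma lagrange_dual_reduce_to_box:
  assumes N: "N \<ge> 1" and lam: "lam > 0"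
    and q0: "\<forall>m\<in>{1..M}. q m \<ge> 0" and q1: "(\<Sum>m=1..M. q m) = 1"
    and p1: "(\<Sum>n=1..N. p n) = 1" and pm: "pm > 0" "\<forall>n\<in>{1..N}. pm \<le> p n"
    and A: "\<forall>m\<in>{1..M}. \<forall>n\<in>{1..N}. \<bar>a m n\<bar> \<le> A" "A \<ge> 0"
  defines "R \<equiv> (lam * ln (real N) + 2 * A) / pm"
  obtains \<mu>' where "\<mu>' \<in> PiE UNIV (\<lambda>n. if n \<in> {1..N} then {0..R} else {0})"
    and "lagrange_dual N M a lam q p \<mu>' \<le> lagrange_dual N M a lam q p \<mu>"
proof -
  let ?D = "lagrange_dual N M a lam q p"
  let ?mx = "Max (\<mu> ` {1..N})" and ?mn = "Min (\<mu> ` {1..N})"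
  show thesis
  proof (cases "?mx - ?mn \<le> R")
    case True
    define \<mu>' where "\<mu>' n = (if n \<in> {1..N} then \<mu> n - ?mn else 0)" for n
    have "\<mu> n \<le> ?mx" "?mn \<le> \<mu> n" if "n \<in> {1..N}" for n
      using that by (auto intro!: Max_ge Min_le)
    then have in_box: "\<mu>' \<in> PiE UNIV (\<lambda>n. if n \<in> {1..N} then {0..R} else {0})"
      using True unfolding \<mu>'_def by (fastforce simp: PiE_iff)
    have "?D \<mu>' = ?D (\<lambda>n. \<mu> n - ?mn)"
      unfolding lagrange_dual_def \<mu>'_def by (intro arg_cong2[where f="(-)"] sum.cong) auto
    also have "\<dots> = ?D \<mu>"
      unfolding diff_conv_add_uminus by (rule lagrange_dual_shift[OF N lam q1 p1])
    finally show thesis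
      using that in_box by simp
  next
    case False
    have "?D (\<lambda>_. 0) \<le> lam * ln (real N) + A"
      by (rule lagrange_dual_zero_le[OF N lam q0 q1 A(1)])
    also have "\<dots> = pm * R - A"
      unfolding R_def using pm by (simp add: field_simps)
    also have "\<dots> \<le> pm * (?mx - ?mn) - A"
      using False pm by (intro diff_right_mono mult_left_mono) auto
    also have "\<dots> \<le> ?D \<mu>"
      using pm by (intro lagrange_dual_ge_spread[OF N lam q0 q1 p1 _ _ A(1)]) auto
    finally have "?D (\<lambda>_. 0) \<le> ?D \<mu>" .
    moreover have "R \<ge> 0"
      unfolding R_def using pm N lam A(2) by (auto intro!: divide_nonneg_pos)
    then have "(\<lambda>_. 0) \<in> PiE UNIV (\<lambda>n. if n \<in> {1..N} then {0..R} else {0})"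
      by (simp add: PiE_iff)
    ultimately show thesis
      using that by blast
  qed
qed

lemma lagrange_dual_attains_min:
  assumes N: "N \<ge> 1" and lam: "lam > 0"
    and q0: "\<forall>m\<in>{1..M}. q m \<ge> 0" and q1: "(\<Sum>m=1..M. q m) = 1"
    and p0: "\<forall>n\<in>{1..N}. p n > 0" and p1: "(\<Sum>n=1..N. p n) = 1"
  obtains \<mu>0 where "\<And>\<mu>. lagrange_dual N M a lam q p \<mu>0 \<le> lagrange_dual N M a lam q p \<mu>"
proof -
  let ?D = "lagrange_dual N M a lam q p"
  define A where "A = (\<Sum>m=1..M. \<Sum>n=1..N. \<bar>a m n\<bar>)"
  define pm where "pm = Min (p ` {1..N})"
  define K where "K = PiE UNIV (\<lambda>n. if n \<in> {1..N} then {0..(lam * ln (real N) + 2 * A) / pm}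
    else {0::real})"
  have A: "\<forall>m\<in>{1..M}. \<forall>n\<in>{1..N}. \<bar>a m n\<bar> \<le> A"
  proof (intro ballI)
    fix m n assume "m \<in> {1..M}" "n \<in> {1..N}"
    then have "\<bar>a m n\<bar> \<le> (\<Sum>n=1..N. \<bar>a m n\<bar>)"
      by (intro member_le_sum) auto
    also have "\<dots> \<le> A"
      unfolding A_def using \<open>m \<in> {1..M}\<close>
      by (intro member_le_sum[where A="{1..M}"] sum_nonneg) auto
    finally show "\<bar>a m n\<bar> \<le> A" .
  qed
  have "A \<ge> 0"
    unfolding A_def by (intro sum_nonneg) auto
  have pm: "pm > 0" "\<forall>n\<in>{1..N}. pm \<le> p n"
    using p0 N unfolding pm_def by (auto simp: Min_gr_iff)
  note reduce = lagrange_dual_reduce_to_box[OF N lam q0 q1 p1 pm A \<open>A \<ge> 0\<close>, folded K_def]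
  have "(\<Sum>n=1..N. exp ((a m n + \<mu> n) / lam)) \<noteq> 0" for m \<mu>
    using N by (intro dual_order.strict_implies_not_eq sum_pos) auto
  then have "continuous_on UNIV ?D"
    unfolding lagrange_dual_def using lam
    by (intro continuous_intros continuous_on_product_coordinates) auto
  moreover have "compact K"
    unfolding K_def by (intro compact_PiE_UNIV) auto
  moreover obtain \<mu>' where "\<mu>' \<in> K"
    using reduce by blast
  ultimately obtain \<mu>K where \<mu>K: "\<forall>\<mu>\<in>K. ?D \<mu>K \<le> ?D \<mu>"
    using continuous_attains_inf[of K ?D] continuous_on_subset[of UNIV ?D K] by blast
  show thesis
  proof (rule that)
    fix \<mu> :: "nat \<Rightarrow> real"
    obtain \<mu>' where "\<mu>' \<in> K" "?D \<mu>' \<le> ?D \<mu>"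
      by (rule reduce)
    then show "?D \<mu>K \<le> ?D \<mu>"
      using \<mu>K by force
  qed
qed

lemma lagrange_dual_min_imp_balance:
  assumes N: "N \<ge> 1" and lam: "lam > 0" and n0: "n0 \<in> {1..N}"
    and min: "\<And>\<mu>. lagrange_dual N M a lam q p \<mu>0 \<le> lagrange_dual N M a lam q p \<mu>"
  shows "(\<Sum>m=1..M. exp ((a m n0 + \<mu>0 n0) / lam) / (\<Sum>n=1..N. exp ((a m n + \<mu>0 n) / lam)) * q m)
    = p n0"
proof -
  define Z where "Z m = (\<Sum>n=1..N. exp ((a m n + \<mu>0 n) / lam))" for m
  define e :: "nat \<Rightarrow> real" where "e n = (if n = n0 then 1 else 0)" for n
  define g where "g t = lagrange_dual N M a lam q p (\<lambda>n. \<mu>0 n + t * e n)" for t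
  have Z: "Z m > 0" for m
    unfolding Z_def using N by (intro sum_pos) auto
  have "(g has_real_derivative
      (\<Sum>m=1..M. q m * (lam * ((\<Sum>n=1..N. exp ((a m n + \<mu>0 n) / lam) * (e n / lam)) / Z m)))
      - (\<Sum>n=1..N. e n * p n)) (at 0)"
    unfolding g_def lagrange_dual_def Z_def using Z[unfolded Z_def] lam
    by (auto intro!: derivative_eq_intros sum.cong)
  then have "(\<Sum>m=1..M. q m * (lam * ((\<Sum>n=1..N. exp ((a m n + \<mu>0 n) / lam) * (e n / lam)) / Z m)))
      - (\<Sum>n=1..N. e n * p n) = 0"
    by (rule DERIV_local_min[OF _ zero_less_one]) (auto simp: g_def min)
  moreover have "(\<Sum>n=1..N. exp ((a m n + \<mu>0 n) / lam) * (e n / lam))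
      = exp ((a m n0 + \<mu>0 n0) / lam) / lam" for m
  proof -
    have "(\<Sum>n=1..N. exp ((a m n + \<mu>0 n) / lam) * (e n / lam))
        = (\<Sum>n=1..N. if n = n0 then exp ((a m n0 + \<mu>0 n0) / lam) / lam else 0)"
      by (intro sum.cong) (auto simp: e_def)
    then show ?thesis
      using n0 by simp
  qed
  moreover have "(\<Sum>n=1..N. e n * p n) = p n0"
  proof -
    have "(\<Sum>n=1..N. e n * p n) = (\<Sum>n=1..N. if n = n0 then p n0 else 0)"
      by (intro sum.cong) (auto simp: e_def)
    then show ?thesis
      using n0 by simp
  qed
  ultimately show ?thesis
    using lam by (simp add: Z_def mult.commute)
qed

lemma ex_bayes_plausible_gibbs_post:
  assumes N: "N \<ge> 1" and lam: "lam > 0" and q: "q \<in> signal_simplex M"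
    and p0: "\<forall>n\<in>{1..N}. p n > 0" and p1: "(\<Sum>n=1..N. p n) = 1"
  shows "\<exists>\<mu>. bayes_plausible N M p (gibbs_post N v lam G q \<mu>) q"
proof -
  have q0: "\<forall>m\<in>{1..M}. q m \<ge> 0" and q1: "(\<Sum>m=1..M. q m) = 1"
    using q by (auto simp: signal_simplex_def)
  obtain \<mu> where min: "\<And>\<mu>'. lagrange_dual N M (\<lambda>m n. v n * Imean G q m) lam q p \<mu>
      \<le> lagrange_dual N M (\<lambda>m n. v n * Imean G q m) lam q p \<mu>'"
    using lagrange_dual_attains_min[OF N lam q0 q1 p0 p1] by blast
  have "bayes_plausible N M p (gibbs_post N v lam G q \<mu>) q"
    unfolding bayes_plausible_def gibbs_post_def partition_fn_def
    by (intro ballI lagrange_dual_min_imp_balance[OF N lam _ min])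
  then show ?thesis by blast
qed


section \<open>Optimal posteriors for a fixed signal distribution\<close>

lemma partition_fn_pos:
  assumes "N \<ge> 1"
  shows "partition_fn N v lam G q \<mu> m > 0"
  unfolding partition_fn_def using assms by (intro sum_pos) auto

lemma feasible_gibbs_post:
  assumes N: "N \<ge> 1" and q: "q \<in> signal_simplex M"
    and B: "bayes_plausible N M p (gibbs_post N v lam G q \<mu>) q"
  shows "feasible N M p (gibbs_post N v lam G q \<mu>) q"
proof -
  have "(\<Sum>n=1..N. gibbs_post N v lam G q \<mu> m n) = 1" for m
    using partition_fn_pos[OF N, of v lam G q \<mu> m]
    by (simp add: gibbs_post_def sum_divide_distrib[symmetric] partition_fn_def)
  moreover have "gibbs_post N v lam G q \<mu> m n \<ge> 0" for m n
    using partition_fn_pos[OF N, of v lam G q \<mu> m] by (simp add: gibbs_post_def)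
  ultimately show ?thesis
    using q B by (simp add: feasible_def)
qed

lemma value_q_minus_objective:
  assumes F: "feasible N M p P q"
  shows "value_q N M v p lam G q \<mu> - objective N M v p lam G P q =
    (\<Sum>m\<in>{m\<in>{1..M}. q m > 0}. q m * (lam * ln (partition_fn N v lam G q \<mu> m)
      - ((\<Sum>n=1..N. P m n * (v n * Imean G q m + \<mu> n)) - lam * (\<Sum>n=1..N. ln (P m n) * P m n))))"
proof -
  let ?S = "{m\<in>{1..M}. q m > 0}"
  have q0: "\<forall>m\<in>{1..M}. q m \<ge> 0" and BP: "\<forall>n\<in>{1..N}. (\<Sum>m=1..M. P m n * q m) = p n"
    using F by (auto simp: feasible_def signal_simplex_def bayes_plausible_def)
  have "(\<Sum>m\<in>?S. q m * (\<Sum>n=1..N. P m n * \<mu> n)) = (\<Sum>n=1..N. \<mu> n * (\<Sum>m\<in>?S. P m n * q m))"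
    by (simp add: sum_distrib_left sum_distrib_right mult_ac) (rule sum.swap)
  also have "\<dots> = (\<Sum>n=1..N. \<mu> n * (\<Sum>m=1..M. P m n * q m))"
    using q0 by (intro sum.cong refl arg_cong[where f="(*) _"] sum.mono_neutral_left) force+
  also have "\<dots> = (\<Sum>n=1..N. \<mu> n * p n)"
    using BP by simp
  finally have multipliers: "(\<Sum>m\<in>?S. q m * (\<Sum>n=1..N. P m n * \<mu> n)) = (\<Sum>n=1..N. \<mu> n * p n)" .
  have "q m * (lam * ln (partition_fn N v lam G q \<mu> m)
      - ((\<Sum>n=1..N. P m n * (v n * Imean G q m + \<mu> n)) - lam * (\<Sum>n=1..N. ln (P m n) * P m n)))
    = lam * (ln (partition_fn N v lam G q \<mu> m) * q m) - cond_mean N v P m * Imean G q m * q m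
      - q m * (\<Sum>n=1..N. P m n * \<mu> n) + lam * (\<Sum>n=1..N. ln (P m n) * P m n * q m)" for m
    by (simp add: cond_mean_def algebra_simps sum.distrib sum_distrib_left sum_distrib_right)
  then have "(\<Sum>m\<in>?S. q m * (lam * ln (partition_fn N v lam G q \<mu> m)
      - ((\<Sum>n=1..N. P m n * (v n * Imean G q m + \<mu> n)) - lam * (\<Sum>n=1..N. ln (P m n) * P m n))))
    = lam * (\<Sum>m\<in>?S. ln (partition_fn N v lam G q \<mu> m) * q m)
      - (\<Sum>m\<in>?S. cond_mean N v P m * Imean G q m * q m)
      - (\<Sum>m\<in>?S. q m * (\<Sum>n=1..N. P m n * \<mu> n))
      + lam * (\<Sum>m\<in>?S. \<Sum>n=1..N. ln (P m n) * P m n * q m)"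
    by (simp add: sum.distrib sum_subtractf sum_distrib_left)
  then show ?thesis
    unfolding multipliers by (simp add: value_q_def objective_def algebra_simps)
qed

lemma objective_le_value_q:
  assumes N: "N \<ge> 1" and lam: "lam > 0" and F: "feasible N M p P q"
  shows "objective N M v p lam G P q \<le> value_q N M v p lam G q \<mu>"
    and "objective N M v p lam G P q = value_q N M v p lam G q \<mu> \<longleftrightarrow>
      (\<forall>m\<in>{1..M}. q m > 0 \<longrightarrow> (\<forall>n\<in>{1..N}. P m n = gibbs_post N v lam G q \<mu> m n))"
proof -
  let ?S = "{m\<in>{1..M}. q m > 0}"
  define gap where "gap m = lam * ln (partition_fn N v lam G q \<mu> m)
      - ((\<Sum>n=1..N. P m n * (v n * Imean G q m + \<mu> n)) - lam * (\<Sum>n=1..N. ln (P m n) * P m n))"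
    for m
  have P0: "\<forall>m\<in>{1..M}. \<forall>n\<in>{1..N}. P m n \<ge> 0" and P1: "\<forall>m\<in>{1..M}. (\<Sum>n=1..N. P m n) = 1"
    using F by (auto simp: feasible_def)
  have gap: "gap m \<ge> 0" "gap m = 0 \<longleftrightarrow> (\<forall>n\<in>{1..N}. P m n = gibbs_post N v lam G q \<mu> m n)"
    if "m \<in> ?S" for m
    using gibbs_variational_principle[of "{1..N}" lam "P m" "\<lambda>n. v n * Imean G q m + \<mu> n"]
      N lam P0 P1 that
    by (auto simp: gap_def partition_fn_def gibbs_post_def)
  have diff: "value_q N M v p lam G q \<mu> - objective N M v p lam G P q = (\<Sum>m\<in>?S. q m * gap m)"
    unfolding gap_def by (rule value_q_minus_objective[OF F])
  have "(\<Sum>m\<in>?S. q m * gap m) \<ge> 0"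
    using gap by (intro sum_nonneg) auto
  then show "objective N M v p lam G P q \<le> value_q N M v p lam G q \<mu>"
    using diff by simp
  have "(\<Sum>m\<in>?S. q m * gap m) = 0 \<longleftrightarrow> (\<forall>m\<in>?S. q m * gap m = 0)"
    using gap by (intro sum_nonneg_eq_0_iff) auto
  also have "\<dots> \<longleftrightarrow> (\<forall>m\<in>{1..M}. q m > 0 \<longrightarrow> (\<forall>n\<in>{1..N}. P m n = gibbs_post N v lam G q \<mu> m n))"
    using gap by auto
  finally show "objective N M v p lam G P q = value_q N M v p lam G q \<mu> \<longleftrightarrow>
      (\<forall>m\<in>{1..M}. q m > 0 \<longrightarrow> (\<forall>n\<in>{1..N}. P m n = gibbs_post N v lam G q \<mu> m n))"
    using diff by auto
qed

lemma objective_gibbs_post: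
  assumes N: "N \<ge> 1" and lam: "lam > 0" and q: "q \<in> signal_simplex M"
    and B: "bayes_plausible N M p (gibbs_post N v lam G q \<mu>) q"
  shows "objective N M v p lam G (gibbs_post N v lam G q \<mu>) q = value_q N M v p lam G q \<mu>"
  using objective_le_value_q(2)[OF N lam feasible_gibbs_post[OF N q B]] by simp

lemma signal_simplex_ex_pos:
  assumes "q \<in> signal_simplex M"
  obtains m where "m \<in> {1..M}" "q m > 0"
proof -
  have q0: "\<forall>m\<in>{1..M}. q m \<ge> 0" and q1: "(\<Sum>m=1..M. q m) = 1"
    using assms by (auto simp: signal_simplex_def)
  obtain m where "m \<in> {1..M}" "q m \<noteq> 0"
    using sum.not_neutral_contains_not_neutral[of q "{1..M}"] q1 by auto
  with q0 that show thesis
    by (auto simp: less_le)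
qed

lemma gibbs_post_eq_imp_shift:
  assumes N: "N \<ge> 1" and lam: "lam > 0"
    and eq: "\<forall>n\<in>{1..N}. gibbs_post N v lam G q \<mu>' m n = gibbs_post N v lam G q \<mu> m n"
  shows "\<exists>c. \<forall>n\<in>{1..N}. \<mu>' n = \<mu> n + c"
proof (intro exI ballI)
  let ?Z = "partition_fn N v lam G q \<mu> m" and ?Z' = "partition_fn N v lam G q \<mu>' m"
  fix n
  assume "n \<in> {1..N}"
  then have "exp ((v n * Imean G q m + \<mu>' n) / lam) / ?Z' = exp ((v n * Imean G q m + \<mu> n) / lam) / ?Z"
    using eq by (simp add: gibbs_post_def)
  then have "ln (exp ((v n * Imean G q m + \<mu>' n) / lam) / ?Z')
      = ln (exp ((v n * Imean G q m + \<mu> n) / lam) / ?Z)"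
    by (rule arg_cong)
  then have "(v n * Imean G q m + \<mu>' n) / lam - ln ?Z' = (v n * Imean G q m + \<mu> n) / lam - ln ?Z"
    using partition_fn_pos[OF N, of v lam G q \<mu>' m] partition_fn_pos[OF N, of v lam G q \<mu> m]
    by (simp add: ln_div)
  then show "\<mu>' n = \<mu> n + lam * (ln ?Z' - ln ?Z)"
    using lam by (simp add: field_simps)
qed

lemma bayes_plausible_multipliers_unique:
  assumes N: "N \<ge> 1" and lam: "lam > 0" and q: "q \<in> signal_simplex M"
    and B: "bayes_plausible N M p (gibbs_post N v lam G q \<mu>) q"
    and B': "bayes_plausible N M p (gibbs_post N v lam G q \<mu>') q"
  shows "\<exists>c. \<forall>n\<in>{1..N}. \<mu>' n = \<mu> n + c"
proof -
  let ?P = "gibbs_post N v lam G q \<mu>" and ?P' = "gibbs_post N v lam G q \<mu>'"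
  have F: "feasible N M p ?P q" and F': "feasible N M p ?P' q"
    using feasible_gibbs_post[OF N q] B B' by auto
  have "value_q N M v p lam G q \<mu>' \<le> value_q N M v p lam G q \<mu>"
    using objective_le_value_q(1)[OF N lam F', of v G \<mu>] objective_gibbs_post[OF N lam q B'] by simp
  moreover have "value_q N M v p lam G q \<mu> \<le> value_q N M v p lam G q \<mu>'"
    using objective_le_value_q(1)[OF N lam F, of v G \<mu>'] objective_gibbs_post[OF N lam q B] by simp
  ultimately have "objective N M v p lam G ?P' q = value_q N M v p lam G q \<mu>"
    using objective_gibbs_post[OF N lam q B'] by simp
  then have same: "\<forall>m\<in>{1..M}. q m > 0 \<longrightarrow> (\<forall>n\<in>{1..N}. ?P' m n = ?P m n)"
    using objective_le_value_q(2)[OF N lam F'] by blast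
  obtain m0 where "m0 \<in> {1..M}" "q m0 > 0"
    using signal_simplex_ex_pos[OF q] .
  with same show ?thesis
    by (intro gibbs_post_eq_imp_shift[OF N lam, where m = m0]) auto
qed


section \<open>Existence of an optimal signal distribution\<close>

lemma cumq_eq_cumq_pred_plus:
  assumes "m \<ge> 1"
  shows "cumq q m = cumq q (m - 1) + q m"
  using assms by (cases m) (auto simp: cumq_def)

lemma cumq_bounds:
  assumes q: "q \<in> signal_simplex M" and k: "k \<le> M"
  shows "0 \<le> cumq q k" and "cumq q k \<le> 1"
proof -
  have q0: "\<forall>m\<in>{1..M}. q m \<ge> 0" and q1: "(\<Sum>m=1..M. q m) = 1"
    using q by (auto simp: signal_simplex_def)
  show "0 \<le> cumq q k"
    unfolding cumq_def using q0 k by (intro sum_nonneg) auto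
  have "cumq q k \<le> (\<Sum>m=1..M. q m)"
    unfolding cumq_def using q0 k by (intro sum_mono2) auto
  then show "cumq q k \<le> 1"
    using q1 by simp
qed

lemma objective_eq_sum_increments:
  assumes G: "set_integrable lborel {0<..<1} (inv_cdf G)" and q: "q \<in> signal_simplex M"
  shows "objective N M v p lam G P q =
    (\<Sum>m=1..M. cond_mean N v P m *
        (integral {0..cumq q m} (inv_cdf G) - integral {0..cumq q (m - 1)} (inv_cdf G)))
    - lam * ((\<Sum>m=1..M. \<Sum>n=1..N. ln (P m n) * P m n * q m) - (\<Sum>n=1..N. ln (p n) * p n))"
proof -
  let ?S = "{m\<in>{1..M}. q m > 0}"
  let ?\<Phi> = "\<lambda>x. integral {0..x} (inv_cdf G)"
  have q_zero: "q m = 0" if "m \<in> {1..M} - ?S" for m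
    using q that by (force simp: signal_simplex_def)
  have "Imean G q m * q m = ?\<Phi> (cumq q m) - ?\<Phi> (cumq q (m - 1))" if m: "m \<in> ?S" for m
  proof -
    have "Imean G q m * q m
        = interval_lebesgue_integral lborel (ereal (cumq q (m - 1))) (ereal (cumq q m)) (inv_cdf G)"
      using m by (simp add: Imean_def)
    also have "\<dots> = ?\<Phi> (cumq q m) - ?\<Phi> (cumq q (m - 1))"
      using m cumq_eq_cumq_pred_plus[of m q] cumq_bounds[OF q, of "m - 1"] cumq_bounds[OF q, of m]
      by (intro interval_lebesgue_integral_eq_integral_diff[OF G]) auto
    finally show ?thesis .
  qed
  moreover have "?\<Phi> (cumq q m) - ?\<Phi> (cumq q (m - 1)) = 0" if "m \<in> {1..M} - ?S" for m
    using that q_zero[OF that] cumq_eq_cumq_pred_plus[of m q] by simp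
  ultimately have "(\<Sum>m\<in>?S. cond_mean N v P m * Imean G q m * q m)
      = (\<Sum>m=1..M. cond_mean N v P m * (?\<Phi> (cumq q m) - ?\<Phi> (cumq q (m - 1))))"
    by (intro sum.mono_neutral_cong_left) (auto simp: mult.assoc)
  moreover have "(\<Sum>n=1..N. ln (P m n) * P m n * q m) = 0" if "m \<in> {1..M} - ?S" for m
    using q_zero[OF that] by simp
  then have "(\<Sum>m\<in>?S. \<Sum>n=1..N. ln (P m n) * P m n * q m)
      = (\<Sum>m=1..M. \<Sum>n=1..N. ln (P m n) * P m n * q m)"
    by (intro sum.mono_neutral_left) auto
  ultimately show ?thesis
    by (simp add: objective_def)
qed

text \<open>As ln 0 = 0, this is x ln x extended by the convention 0 ln 0 = 0.\<close>
lemma continuous_on_ln_mult_self: "continuous_on {0..} (\<lambda>x::real. ln x * x)"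
proof -
  have "continuous (at x within {0..}) (\<lambda>x::real. ln x * x)" if "x \<ge> 0" for x
  proof (cases "x = 0")
    case True
    have "((\<lambda>x::real. ln x * x) \<longlongrightarrow> 0) (at_right 0)"
      by real_asymp
    then show ?thesis
      using True by (simp add: continuous_within at_within_Ici_at_right)
  next
    case False
    then have "isCont (\<lambda>x::real. ln x * x) x"
      using that by (intro continuous_intros) auto
    then show ?thesis
      by (rule continuous_at_imp_continuous_at_within)
  qed
  then show ?thesis
    by (simp add: continuous_on_eq_continuous_within)
qed

lemma continuous_on_fst_apply [continuous_intros]:
  "continuous_on S (\<lambda>z::('i \<Rightarrow> 'j \<Rightarrow> 'c::topological_space) \<times> 'd::topological_space. fst z i j)"
  by (rule continuous_on_compose2[OF continuous_on_product_then_coordinatewise[OF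
        continuous_on_product_coordinates[of i]] continuous_on_fst[OF continuous_on_id]]) simp

lemma continuous_on_snd_apply [continuous_intros]:
  "continuous_on S (\<lambda>z::'d::topological_space \<times> ('i \<Rightarrow> 'c::topological_space). snd z i)"
  by (rule continuous_on_compose2[OF continuous_on_product_coordinates[of i]
        continuous_on_snd[OF continuous_on_id]]) simp

lemma continuous_on_objective:
  assumes G: "set_integrable lborel {0<..<1} (inv_cdf G)"
  shows "continuous_on {z. feasible N M p (fst z) (snd z)} (\<lambda>z. objective N M v p lam G (fst z) (snd z))"
proof -
  let ?F = "{z. feasible N M p (fst z) (snd z)}"
  define \<Phi> where "\<Phi> x = integral {0..x} (inv_cdf G)" for x
  define xlnx :: "real \<Rightarrow> real" where "xlnx = (\<lambda>x. ln x * x)"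
  have "continuous_on {0..1} \<Phi>"
    unfolding \<Phi>_def
    by (rule indefinite_integral_continuous_1[OF set_integrable_Ioo_imp_integrable_on_Icc[OF G]])
  moreover have "continuous_on UNIV (\<lambda>z::(nat \<Rightarrow> nat \<Rightarrow> real) \<times> (nat \<Rightarrow> real). cumq (snd z) k)" for k
    unfolding cumq_def by (intro continuous_intros)
  ultimately have \<Phi>_cumq: "continuous_on ?F (\<lambda>z. \<Phi> (cumq (snd z) k))" if "k \<le> M" for k
  proof (rule continuous_on_compose2[OF _ continuous_on_subset])
    show "(\<lambda>z. cumq (snd z) k) ` ?F \<subseteq> {0..1}"
      using cumq_bounds[OF _ that] by (auto simp: feasible_def)
  qed auto
  have xlnx_P: "continuous_on ?F (\<lambda>z. xlnx (fst z m n))" if "m \<in> {1..M}" "n \<in> {1..N}" for m n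
  proof (rule continuous_on_compose2[OF continuous_on_ln_mult_self[folded xlnx_def]])
    show "continuous_on ?F (\<lambda>z. fst z m n)"
      by (rule continuous_on_fst_apply)
    show "(\<lambda>z. fst z m n) ` ?F \<subseteq> {0..}"
      using that by (auto simp: feasible_def)
  qed
  have "continuous_on ?F (\<lambda>z. (\<Sum>m=1..M. (\<Sum>n=1..N. v n * fst z m n) *
        (\<Phi> (cumq (snd z) m) - \<Phi> (cumq (snd z) (m - 1))))
      - lam * ((\<Sum>m=1..M. \<Sum>n=1..N. xlnx (fst z m n) * snd z m) - (\<Sum>n=1..N. ln (p n) * p n)))"
    by (intro continuous_intros \<Phi>_cumq xlnx_P) auto
  then show ?thesis
    by (rule continuous_on_eq)
      (auto simp: objective_eq_sum_increments[OF G] feasible_def cond_mean_def \<Phi>_def xlnx_def)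
qed

lemma member_le_one_if_sum_eq_one:
  fixes f :: "'a \<Rightarrow> real"
  assumes "finite A" "\<forall>x\<in>A. f x \<ge> 0" "sum f A = 1" "i \<in> A"
  shows "f i \<le> 1"
  using member_le_sum[of i A f] assms by auto

text \<open>The feasible set itself is not compact, since entries outside the index ranges are
  unconstrained; zeroing them changes neither feasibility nor the objective.\<close>
lemma compact_feasible_supported:
  "compact {z. feasible N M p (fst z) (snd z)
      \<and> (\<forall>m n. m \<notin> {1..M} \<or> n \<notin> {1..N} \<longrightarrow> fst z m n = 0) \<and> (\<forall>m. m \<notin> {1..M} \<longrightarrow> snd z m = 0)}"
  (is "compact ?K")
proof -
  define BP where "BP = PiE UNIV (\<lambda>m. PiE UNIV (\<lambda>n.
      if m \<in> {1..M} \<and> n \<in> {1..N} then {0..1} else {0::real}))"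
  define BQ where "BQ = PiE UNIV (\<lambda>m. if m \<in> {1..M} then {0..1} else {0::real})"
  have "?K \<subseteq> BP \<times> BQ"
  proof
    fix z
    assume "z \<in> ?K"
    then show "z \<in> BP \<times> BQ"
      unfolding BP_def BQ_def
      by (auto simp: feasible_def signal_simplex_def mem_Times_iff PiE_iff
          intro: member_le_one_if_sum_eq_one[of "{1..N}"] member_le_one_if_sum_eq_one[of "{1..M}"])
  qed
  moreover have "closed ?K"
    unfolding feasible_def signal_simplex_def bayes_plausible_def Ball_def mem_Collect_eq
    by (intro closed_Collect_conj closed_Collect_all closed_Collect_imp open_Collect_const
        closed_Collect_le closed_Collect_eq continuous_intros)
  moreover have "compact (BP \<times> BQ)"
    unfolding BP_def BQ_def by (intro compact_Times compact_PiE_UNIV) auto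
  ultimately show ?thesis
    using compact_Int_closed[of "BP \<times> BQ" ?K] by (simp add: Int_absorb1)
qed

lemma objective_cong:
  assumes P: "\<And>m n. m \<in> {1..M} \<Longrightarrow> n \<in> {1..N} \<Longrightarrow> P' m n = P m n"
    and q: "\<And>m. m \<in> {1..M} \<Longrightarrow> q' m = q m"
  shows "objective N M v p lam G P' q' = objective N M v p lam G P q"
proof -
  have cumq: "cumq q' k = cumq q k" if "k \<le> M" for k
    unfolding cumq_def using that q by (intro sum.cong) auto
  have Imean: "Imean G q' m = Imean G q m" if "m \<in> {1..M}" for m
  proof -
    have "m \<le> M" "m - 1 \<le> M"
      using that by auto
    then show ?thesis
      using that q by (simp add: Imean_def cumq)
  qed
  have cond_mean: "cond_mean N v P' m = cond_mean N v P m" if "m \<in> {1..M}" for m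
    using that P by (simp add: cond_mean_def)
  have S: "{m\<in>{1..M}. q' m > 0} = {m\<in>{1..M}. q m > 0}"
    using q by auto
  show ?thesis
    unfolding objective_def S
    by (intro arg_cong2[where f="(-)"] arg_cong2[where f="(*)"] refl sum.cong)
      (auto simp: Imean cond_mean P q)
qed

lemma objective_attains_max:
  assumes M: "M \<ge> 1" and p0: "\<forall>n\<in>{1..N}. p n > 0" and p1: "(\<Sum>n=1..N. p n) = 1"
    and G: "set_integrable lborel {0<..<1} (inv_cdf G)"
  obtains P0 q0 where "feasible N M p P0 q0"
    and "\<And>P q. feasible N M p P q \<Longrightarrow> objective N M v p lam G P q \<le> objective N M v p lam G P0 q0"
proof -
  let ?K = "{z. feasible N M p (fst z) (snd z)
      \<and> (\<forall>m n. m \<notin> {1..M} \<or> n \<notin> {1..N} \<longrightarrow> fst z m n = 0) \<and> (\<forall>m. m \<notin> {1..M} \<longrightarrow> snd z m = 0)}"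
  let ?obj = "\<lambda>z. objective N M v p lam G (fst z) (snd z)"
  define P1 where "P1 m n = (if m \<in> {1..M} \<and> n \<in> {1..N} then p n else 0)" for m n
  define q1 :: "nat \<Rightarrow> real" where "q1 m = (if m = 1 then 1 else 0)" for m
  have "(\<Sum>m=1..M. P1 m n * q1 m) = p n" if "n \<in> {1..N}" for n
    using M that by (simp add: P1_def q1_def if_distrib cong: if_cong)
  then have "(P1, q1) \<in> ?K"
    using M p0 p1 by (auto simp: feasible_def signal_simplex_def bayes_plausible_def P1_def q1_def less_imp_le)
  moreover have "continuous_on ?K ?obj"
    by (rule continuous_on_subset[OF continuous_on_objective[OF G]]) auto
  ultimately obtain z0 where z0: "z0 \<in> ?K" "\<forall>z\<in>?K. ?obj z \<le> ?obj z0"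
    using continuous_attains_sup[OF compact_feasible_supported] by blast
  show thesis
  proof (rule that)
    show "feasible N M p (fst z0) (snd z0)"
      using z0(1) by simp
    fix P q
    assume F: "feasible N M p P q"
    define P' where "P' m n = (if m \<in> {1..M} \<and> n \<in> {1..N} then P m n else 0)" for m n
    define q' where "q' m = (if m \<in> {1..M} then q m else 0)" for m
    have "(P', q') \<in> ?K"
      using F by (auto simp: feasible_def signal_simplex_def bayes_plausible_def P'_def q'_def)
    then have "?obj (P', q') \<le> ?obj z0"
      using z0(2) by blast
    moreover have "objective N M v p lam G P' q' = objective N M v p lam G P q"
      by (rule objective_cong) (auto simp: P'_def q'_def)
    ultimately show "objective N M v p lam G P q \<le> ?obj z0"
      by simp
  qed
qed

lemma value_q_attains_max:
  assumes N: "N \<ge> 1" and lam: "lam > 0" and M: "M \<ge> 1"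
    and p0: "\<forall>n\<in>{1..N}. p n > 0" and p1: "(\<Sum>n=1..N. p n) = 1"
    and G: "set_integrable lborel {0<..<1} (inv_cdf G)"
  obtains q0 \<mu>0 where "q0 \<in> signal_simplex M"
    and "bayes_plausible N M p (gibbs_post N v lam G q0 \<mu>0) q0"
    and "\<And>q \<mu>. q \<in> signal_simplex M \<Longrightarrow> bayes_plausible N M p (gibbs_post N v lam G q \<mu>) q \<Longrightarrow>
      value_q N M v p lam G q \<mu> \<le> value_q N M v p lam G q0 \<mu>0"
    and "\<And>P q. feasible N M p P q \<Longrightarrow> objective N M v p lam G P q \<le> value_q N M v p lam G q0 \<mu>0"
proof -
  obtain P0 q0 where F0: "feasible N M p P0 q0"
    and opt: "\<And>P q. feasible N M p P q \<Longrightarrow> objective N M v p lam G P q \<le> objective N M v p lam G P0 q0"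
    using objective_attains_max[OF M p0 p1 G] by blast
  then have q0: "q0 \<in> signal_simplex M"
    by (simp add: feasible_def)
  then obtain \<mu>0 where B0: "bayes_plausible N M p (gibbs_post N v lam G q0 \<mu>0) q0"
    using ex_bayes_plausible_gibbs_post[OF N lam _ p0 p1] by blast
  have opt_value: "objective N M v p lam G P q \<le> value_q N M v p lam G q0 \<mu>0"
    if "feasible N M p P q" for P q
    using opt[OF that] objective_le_value_q(1)[OF N lam F0, of v G \<mu>0] by linarith
  show thesis
  proof (rule that[OF q0 B0 _ opt_value])
    fix q \<mu>
    assume q: "q \<in> signal_simplex M" and B: "bayes_plausible N M p (gibbs_post N v lam G q \<mu>) q"
    have "value_q N M v p lam G q \<mu> = objective N M v p lam G (gibbs_post N v lam G q \<mu>) q"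
      using objective_gibbs_post[OF N lam q B] by simp
    also have "\<dots> \<le> value_q N M v p lam G q0 \<mu>0"
      by (rule opt_value[OF feasible_gibbs_post[OF N q B]])
    finally show "value_q N M v p lam G q \<mu> \<le> value_q N M v p lam G q0 \<mu>0" .
  qed
qed

theorem proposition6:
  fixes N M :: nat and v p :: "nat \<Rightarrow> real" and lam \<sigma>Z T :: real and G :: "real \<Rightarrow> real"
  assumes "N \<ge> 2"
    and "inj_on v {1..N}"
    and "\<forall>n\<in>{1..N}. p n > 0"
    and "(\<Sum>n=1..N. p n) = 1"
    and "lam > 0" and "\<sigma>Z > 0" and "T > 0"
    and "M \<ge> 1"
    and "G = normal_cdf (\<sigma>Z * sqrt T)"
  shows
    \<comment> \<open>for each q, a Bayes-plausible multiplier vector exists and is unique up to a constant\<close>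
    "(\<forall>q\<in>signal_simplex M.
        (\<exists>\<mu>. bayes_plausible N M p (gibbs_post N v lam G q \<mu>) q) \<and>
        (\<forall>\<mu> \<mu>'. bayes_plausible N M p (gibbs_post N v lam G q \<mu>) q \<longrightarrow>
                 bayes_plausible N M p (gibbs_post N v lam G q \<mu>') q \<longrightarrow>
                 (\<exists>c. \<forall>n\<in>{1..N}. \<mu>' n = \<mu> n + c)))
     \<and>
     \<comment> \<open>for each q, the Gibbs posteriors are feasible and attain the value\<close>
     (\<forall>q \<mu>. q \<in> signal_simplex M \<longrightarrow> bayes_plausible N M p (gibbs_post N v lam G q \<mu>) q \<longrightarrow>
        feasible N M p (gibbs_post N v lam G q \<mu>) q \<and>
        objective N M v p lam G (gibbs_post N v lam G q \<mu>) q = value_q N M v p lam G q \<mu>)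
     \<and>
     \<comment> \<open>and they are the unique optimal posteriors for the states with q(s_m) > 0\<close>
     (\<forall>q \<mu> P. bayes_plausible N M p (gibbs_post N v lam G q \<mu>) q \<longrightarrow> feasible N M p P q \<longrightarrow>
        objective N M v p lam G P q \<le> value_q N M v p lam G q \<mu> \<and>
        (objective N M v p lam G P q = value_q N M v p lam G q \<mu> \<longleftrightarrow>
           (\<forall>m\<in>{1..M}. q m > 0 \<longrightarrow> (\<forall>n\<in>{1..N}. P m n = gibbs_post N v lam G q \<mu> m n))))
     \<and>
     \<comment> \<open>an optimal q exists; the optimal value is the maximum over q of the value\<close>
     (\<exists>q0 \<mu>0. q0 \<in> signal_simplex M \<and> bayes_plausible N M p (gibbs_post N v lam G q0 \<mu>0) q0 \<and>
        (\<forall>q \<mu>. q \<in> signal_simplex M \<longrightarrow> bayes_plausible N M p (gibbs_post N v lam G q \<mu>) q \<longrightarrow>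
           value_q N M v p lam G q \<mu> \<le> value_q N M v p lam G q0 \<mu>0) \<and>
        (\<forall>P q. feasible N M p P q \<longrightarrow>
           objective N M v p lam G P q \<le> value_q N M v p lam G q0 \<mu>0))"
proof -
  have N: "N \<ge> 1" and lam: "lam > 0"
    using assms(1,5) by auto
  have G: "set_integrable lborel {0<..<1} (inv_cdf G)"
    using set_integrable_inv_normal_cdf[of "\<sigma>Z * sqrt T"] assms(6,7,9) by simp
  show ?thesis
  proof (intro conjI, goal_cases)
    case 1
    show ?case
      using ex_bayes_plausible_gibbs_post[OF N lam _ assms(3,4)]
        bayes_plausible_multipliers_unique[OF N lam] by blast
  next
    case 2
    show ?case
      using feasible_gibbs_post[OF N] objective_gibbs_post[OF N lam] by blast
  next
    case 3
    show ?case
      using objective_le_value_q[OF N lam] by blast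
  next
    case 4
    show ?case
      by (rule value_q_attains_max[OF N lam assms(8,3,4) G]) blast
  qed
qed

end
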